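(* Each of the following ten sets of four generalized Bell states in $\mathbb{C}^4\otimes\mathbb{C}^4$ is perfectly distinguishable by one-way LOCC using only projective measurements: $\{\ket{\psi_{00}}\}\cup T$ with $T$ one of $\{\ket{\psi_{01}},\ket{\psi_{10}},\ket{\psi_{11}}\}$, $\{\ket{\psi_{01}},\ket{\psi_{10}},\ket{\psi_{30}}\}$, $\{\ket{\psi_{01}},\ket{\psi_{10}},\ket{\psi_{32}}\}$, $\{\ket{\psi_{01}},\ket{\psi_{11}},\ket{\psi_{12}}\}$, $\{\ket{\psi_{01}},\ket{\psi_{11}},\ket{\psi_{31}}\}$, $\{\ket{\psi_{01}},\ket{\psi_{11}},\ket{\psi_{33}}\}$, $\{\ket{\psi_{01}},\ket{\psi_{12}},\ket{\psi_{30}}\}$, $\{\ket{\psi_{01}},\ket{\psi_{12}},\ket{\psi_{32}}\}$, $\{\ket{\psi_{01}},\ket{\psi_{13}},\ket{\psi_{31}}\}$, $\{\ket{\psi_{01}},\ket{\psi_{13}},\ket{\psi_{33}}\}$.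
   Context: Generalized Bell states in $\mathbb{C}^4\otimes\mathbb{C}^4$ (Alice holds the first factor, Bob the second): $\ket{\psi_{nm}}=\frac12\sum_{j=0}^{3}e^{2\pi i jn/4}\ket{j}_A\ket{j\oplus_4 m}_B$ for $n,m\in\{0,1,2,3\}$, where $j\oplus_4 m=(j+m)\bmod 4$. Perfect distinguishability by one-way LOCC using only projective measurements means: one party performs a projective measurement on her subsystem, communicates the outcome classically, and the other party then performs a projective measurement (depending on that outcome) whose result identifies with certainty which state of the set was shared. *)

theory Defs
  imports Complex_Main
begin

text \<open>Operators on C^4 are represented as functions nat => nat => complex,
  only the entries with indices < 4 being relevant. A vector of C^4 (x) C^4 is a
  function nat => nat => complex, psi j k = coefficient of |j>_A |k>_B (j,k < 4).\<close>

type_synonym op4 = "nat \<Rightarrow> nat \<Rightarrow> complex"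
type_synonym bvec = "nat \<Rightarrow> nat \<Rightarrow> complex"

definition mmul :: "op4 \<Rightarrow> op4 \<Rightarrow> op4" where
  "mmul A B = (\<lambda>i j. \<Sum>k<4. A i k * B k j)"

definition is_projector :: "op4 \<Rightarrow> bool" where
  "is_projector P \<longleftrightarrow>
     (\<forall>i<4. \<forall>j<4. P i j = cnj (P j i) \<and> mmul P P i j = P i j)"

definition proj_meas :: "nat \<Rightarrow> (nat \<Rightarrow> op4) \<Rightarrow> bool" where
  "proj_meas m P \<longleftrightarrow>
     (\<forall>a<m. is_projector (P a)) \<and>
     (\<forall>a<m. \<forall>b<m. a \<noteq> b \<longrightarrow> (\<forall>i<4. \<forall>j<4. mmul (P a) (P b) i j = 0)) \<and>
     (\<forall>i<4. \<forall>j<4. (\<Sum>a<m. P a i j) = (if i = j then 1 else 0))"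

definition bell :: "nat \<Rightarrow> nat \<Rightarrow> bvec" where
  "bell n m = (\<lambda>j k. if j < 4 \<and> k < 4 \<and> k = (j + m) mod 4
                      then (1/2) * cis (2 * pi * real j * real n / 4) else 0)"

definition tensor_apply :: "op4 \<Rightarrow> op4 \<Rightarrow> bvec \<Rightarrow> bvec" where
  "tensor_apply A B psi = (\<lambda>i j. \<Sum>k<4. \<Sum>l<4. A i k * B j l * psi k l)"

definition nonzero_bvec :: "bvec \<Rightarrow> bool" where
  "nonzero_bvec v \<longleftrightarrow> (\<exists>i<4. \<exists>j<4. v i j \<noteq> 0)"

text \<open>Outcome (A, B) has nonzero probability on Bell state with label s iff
  (A (x) B) psi_s is nonzero.\<close>
definition identifies :: "op4 \<Rightarrow> op4 \<Rightarrow> (nat \<times> nat) set \<Rightarrow> bool" where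
  "identifies A B S \<longleftrightarrow>
     (\<forall>s\<in>S. \<forall>t\<in>S. nonzero_bvec (tensor_apply A B (bell (fst s) (snd s))) \<and>
                   nonzero_bvec (tensor_apply A B (bell (fst t) (snd t))) \<longrightarrow> s = t)"

definition oneway_A_to_B :: "(nat \<times> nat) set \<Rightarrow> bool" where
  "oneway_A_to_B S \<longleftrightarrow>
     (\<exists>m P. proj_meas m P \<and>
        (\<forall>a<m. \<exists>m' Q. proj_meas m' Q \<and> (\<forall>b<m'. identifies (P a) (Q b) S)))"

definition oneway_B_to_A :: "(nat \<times> nat) set \<Rightarrow> bool" where
  "oneway_B_to_A S \<longleftrightarrow>
     (\<exists>m Q. proj_meas m Q \<and>
        (\<forall>b<m. \<exists>m' P. proj_meas m' P \<and> (\<forall>a<m'. identifies (P a) (Q b) S)))"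

definition oneway_PVM_distinguishable :: "(nat \<times> nat) set \<Rightarrow> bool" where
  "oneway_PVM_distinguishable S \<longleftrightarrow> oneway_A_to_B S \<or> oneway_B_to_A S"

end

theory Submission
  imports Defs
begin

text \<open>Alice measures in the basis \<open>\<alpha>\<^sub>c(j) = \<i>^(jc + 2\<lfloor>j/2\<rfloor>)/2\<close>, \<open>c < 4\<close>.
  For every outcome \<open>c\<close> and every Bell state \<open>\<psi>\<^sub>n\<^sub>m\<close>, Bob's conditional state
  \<open>2 (\<langle>\<alpha>\<^sub>c| \<otimes> I) \<psi>\<^sub>n\<^sub>m\<close> is again a vector of fourth roots of unity divided by 2.
  For each of the ten sets the four conditional states belonging to one outcome turn out to be
  pairwise orthogonal, so Bob can measure in the basis they form and identify the state;
  checking this orthogonality is a finite computation with powers of \<open>\<i>\<close>.\<close>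

definition ipow :: "nat \<Rightarrow> complex" where
  "ipow e = \<i> ^ (e mod 4)"

lemma ipow_eq_power: "ipow e = \<i> ^ e"
proof -
  have "\<i> ^ e = \<i> ^ (4 * (e div 4) + e mod 4)" by simp
  also have "\<dots> = \<i> ^ (e mod 4)" by (simp only: power_add power_mult) simp
  finally show ?thesis unfolding ipow_def ..
qed

lemma ipow_add: "ipow a * ipow b = ipow (a + b)"
  by (simp add: ipow_eq_power power_add)

lemma i_cube: "\<i> ^ 3 = - \<i>"
  by (simp add: power3_eq_cube)

lemma cnj_ipow: "cnj (ipow a) = ipow (3 * a)"
  by (simp add: ipow_eq_power power_mult i_cube)

lemma ipow_mult_4: "ipow (4 * a) = 1"
  by (simp add: ipow_def)

lemma ipow_cases:
  "ipow e = (if e mod 4 = 0 then 1 else if e mod 4 = 1 then \<i> else if e mod 4 = 2 then -1 else -\<i>)"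
proof -
  have "e mod 4 = 0 \<or> e mod 4 = 1 \<or> e mod 4 = 2 \<or> e mod 4 = 3" by linarith
  then show ?thesis unfolding ipow_def by (auto simp: i_cube)
qed

lemma bell_eq_ipow:
  "bell n m j k = (if j < 4 \<and> k < 4 \<and> k = (j + m) mod 4 then ipow (j * n) / 2 else 0)"
proof -
  have "cis (2 * pi * real j * real n / 4) = cis (pi / 2) ^ (j * n)"
    by (simp only: DeMoivre) (simp add: field_simps)
  then show ?thesis unfolding bell_def by (simp add: ipow_eq_power)
qed

lemma sum_lessThan_4: "(\<Sum>a<4. f a) = f 0 + f 1 + f 2 + f (3::nat)"
  by (simp add: eval_nat_numeral)

lemma all_less_4: "(\<forall>a<4. P a) \<longleftrightarrow> P 0 \<and> P 1 \<and> P 2 \<and> P (3::nat)"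
  by (auto simp: eval_nat_numeral less_Suc_eq)

lemma mod_add_eq_iff_mod_diff:
  "k < n \<Longrightarrow> l < (n::nat) \<Longrightarrow> m < n \<Longrightarrow> (l = (k + m) mod n) = (k = (l + n - m) mod n)"
  by (auto simp: mod_if)

definition inner4 :: "(nat \<Rightarrow> complex) \<Rightarrow> (nat \<Rightarrow> complex) \<Rightarrow> complex" where
  "inner4 v w = (\<Sum>l<4. cnj (v l) * w l)"

definition rank_one :: "(nat \<Rightarrow> complex) \<Rightarrow> op4" where
  "rank_one v = (\<lambda>i j. v i * cnj (v j))"

text \<open>The completeness condition is redundant when \<open>n = 4\<close>, but including it spares a
  dimension argument: it is exactly what \<open>proj_meas\<close> needs.\<close>

definition orthonormal_basis :: "nat \<Rightarrow> (nat \<Rightarrow> nat \<Rightarrow> complex) \<Rightarrow> bool" where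
  "orthonormal_basis n v \<longleftrightarrow>
     (\<forall>a<n. \<forall>b<n. inner4 (v a) (v b) = (if a = b then 1 else 0)) \<and>
     (\<forall>i<4. \<forall>j<4. (\<Sum>a<n. v a i * cnj (v a j)) = (if i = j then 1 else 0))"

lemma orthonormal_basis_cong:
  "(\<And>a. a < n \<Longrightarrow> v a = w a) \<Longrightarrow> orthonormal_basis n v = orthonormal_basis n w"
  unfolding orthonormal_basis_def by simp

lemma mmul_rank_one: "mmul (rank_one v) (rank_one w) i j = v i * inner4 v w * cnj (w j)"
  unfolding mmul_def rank_one_def inner4_def
  by (simp add: sum_distrib_left sum_distrib_right mult_ac)

lemma proj_meas_rank_one:
  "orthonormal_basis n v \<Longrightarrow> proj_meas n (\<lambda>a. rank_one (v a))"
  unfolding orthonormal_basis_def proj_meas_def is_projector_def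
  by (auto simp: mmul_rank_one) (auto simp: rank_one_def)

text \<open>The factor 2 compensates the amplitude \<open>1/2\<close> of a maximally entangled state, so
  a unit vector \<open>\<alpha>\<close> yields a unit conditional state.\<close>

definition bob_state :: "(nat \<Rightarrow> complex) \<Rightarrow> nat \<times> nat \<Rightarrow> nat \<Rightarrow> complex" where
  "bob_state \<alpha> s l = 2 * (\<Sum>k<4. cnj (\<alpha> k) * bell (fst s) (snd s) k l)"

lemma tensor_apply_rank_one_bell:
  "tensor_apply (rank_one \<alpha>) (rank_one w) (bell n m) i j
     = \<alpha> i * w j * inner4 w (bob_state \<alpha> (n, m)) / 2"
proof -
  have "tensor_apply (rank_one \<alpha>) (rank_one w) (bell n m) i j
      = \<alpha> i * w j * (\<Sum>k<4. \<Sum>l<4. cnj (\<alpha> k) * cnj (w l) * bell n m k l)"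
    unfolding tensor_apply_def rank_one_def by (simp add: sum_distrib_left mult_ac)
  also have "(\<Sum>k<4. \<Sum>l<4. cnj (\<alpha> k) * cnj (w l) * bell n m k l) = inner4 w (bob_state \<alpha> (n, m)) / 2"
    unfolding inner4_def bob_state_def by (subst sum.swap) (simp add: sum_distrib_left mult_ac)
  finally show ?thesis by simp
qed

lemma inner4_bob_state_nonzero:
  "nonzero_bvec (tensor_apply (rank_one \<alpha>) (rank_one w) (bell n m))
     \<Longrightarrow> inner4 w (bob_state \<alpha> (n, m)) \<noteq> 0"
  unfolding nonzero_bvec_def tensor_apply_rank_one_bell by auto

lemma oneway_A_to_B_by_bases:
  assumes alice: "orthonormal_basis m \<alpha>"
    and bob: "\<forall>c<m. orthonormal_basis (length st) (\<lambda>b. bob_state (\<alpha> c) (st ! b))"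
  shows "oneway_A_to_B (set st)"
proof -
  have "identifies (rank_one (\<alpha> c)) (rank_one (bob_state (\<alpha> c) (st ! b))) (set st)"
    if "c < m" "b < length st" for c b
  proof -
    define \<beta> where "\<beta> b = bob_state (\<alpha> c) (st ! b)" for b
    have "s = st ! b" if "s \<in> set st"
      and "nonzero_bvec (tensor_apply (rank_one (\<alpha> c)) (rank_one (\<beta> b)) (bell (fst s) (snd s)))"
    for s
    proof -
      from \<open>s \<in> set st\<close> obtain a where a: "a < length st" "s = st ! a"
        by (auto simp: in_set_conv_nth)
      have "inner4 (\<beta> b) (\<beta> a) \<noteq> 0"
        using inner4_bob_state_nonzero[OF that(2)] a by (simp add: \<beta>_def)
      with bob \<open>c < m\<close> \<open>b < length st\<close> a have "a = b"
        unfolding orthonormal_basis_def \<beta>_def by (metis (full_types))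
      with a show ?thesis by simp
    qed
    then show ?thesis unfolding identifies_def \<beta>_def by blast
  qed
  moreover have "proj_meas (length st) (\<lambda>b. rank_one (bob_state (\<alpha> c) (st ! b)))" if "c < m" for c
    using bob that by (simp add: proj_meas_rank_one)
  ultimately show ?thesis
    unfolding oneway_A_to_B_def using proj_meas_rank_one[OF alice] by blast
qed

definition phase_vec :: "(nat \<Rightarrow> nat) \<Rightarrow> nat \<Rightarrow> complex" where
  "phase_vec E l = (if l < 4 then ipow (E l) / 2 else 0)"

lemma inner4_phase_vec: "inner4 (phase_vec E) (phase_vec F) = (\<Sum>l<4. ipow (3 * E l + F l)) / 4"
  unfolding inner4_def phase_vec_def by (simp add: sum_divide_distrib cnj_ipow ipow_add)

lemma orthonormal_basis_phase_vec:
  assumes orth: "\<forall>a<4. \<forall>b<4. a \<noteq> b \<longrightarrow> (\<Sum>l<4. ipow (3 * E a l + E b l)) = 0"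
    and compl: "\<forall>i<4. \<forall>j<4. i \<noteq> j \<longrightarrow> (\<Sum>a<4. ipow (E a i + 3 * E a j)) = 0"
  shows "orthonormal_basis 4 (\<lambda>a. phase_vec (E a))"
  unfolding orthonormal_basis_def
proof (intro conjI allI impI)
  fix a b :: nat assume "a < 4" "b < 4"
  have "3 * E a l + E a l = 4 * E a l" for l by simp
  then show "inner4 (phase_vec (E a)) (phase_vec (E b)) = (if a = b then 1 else 0)"
    using orth \<open>a < 4\<close> \<open>b < 4\<close> unfolding inner4_phase_vec by (simp add: ipow_mult_4)
next
  fix i j :: nat assume "i < 4" "j < 4"
  then have "(\<Sum>a<4. phase_vec (E a) i * cnj (phase_vec (E a) j)) = (\<Sum>a<4. ipow (E a i + 3 * E a j)) / 4"
    unfolding phase_vec_def by (simp add: sum_divide_distrib cnj_ipow ipow_add)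
  also have "\<dots> = (if i = j then 1 else 0)"
  proof (cases "i = j")
    case True
    have "E a j + 3 * E a j = 4 * E a j" for a by simp
    with True show ?thesis by (simp add: ipow_mult_4)
  next
    case False
    with compl \<open>i < 4\<close> \<open>j < 4\<close> show ?thesis by simp
  qed
  finally show "(\<Sum>a<4. phase_vec (E a) i * cnj (phase_vec (E a) j)) = (if i = j then 1 else 0)" .
qed

definition alice_phase :: "nat \<Rightarrow> nat \<Rightarrow> nat" where
  "alice_phase c j = j * c + 2 * (j div 2)"

definition bob_phase :: "nat \<Rightarrow> nat \<times> nat \<Rightarrow> nat \<Rightarrow> nat" where
  "bob_phase c s l = (let j = (l + 4 - snd s) mod 4 in 3 * alice_phase c j + j * fst s)"

lemma orthonormal_basis_alice: "orthonormal_basis 4 (\<lambda>c. phase_vec (alice_phase c))"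
  by (rule orthonormal_basis_phase_vec)
    (simp_all add: all_less_4 sum_lessThan_4 alice_phase_def ipow_cases)

text \<open>Only the summand \<open>k = (l - m) mod 4\<close> of \<open>bob_state\<close> survives.\<close>

lemma bob_state_alice:
  assumes "snd s < 4"
  shows "bob_state (phase_vec (alice_phase c)) s = phase_vec (bob_phase c s)"
proof
  fix l
  show "bob_state (phase_vec (alice_phase c)) s l = phase_vec (bob_phase c s) l"
  proof (cases "l < 4")
    case False
    then show ?thesis unfolding bob_state_def phase_vec_def by (simp add: bell_eq_ipow)
  next
    case True
    define j where "j = (l + 4 - snd s) mod 4"
    have "j < 4" unfolding j_def by simp
    have "k < 4 \<Longrightarrow> (l = (k + snd s) mod 4) = (k = j)" for k
      unfolding j_def using mod_add_eq_iff_mod_diff True assms by blast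
    then have "bob_state (phase_vec (alice_phase c)) s l
        = 2 * (\<Sum>k<4. if k = j then cnj (phase_vec (alice_phase c) k) * (ipow (k * fst s) / 2) else 0)"
      unfolding bob_state_def by (intro arg_cong[where f = "\<lambda>x. 2 * x"] sum.cong) (auto simp: bell_eq_ipow True)
    also have "\<dots> = cnj (phase_vec (alice_phase c) j) * ipow (j * fst s)"
      using \<open>j < 4\<close> by simp
    also have "\<dots> = phase_vec (bob_phase c s) l"
      unfolding phase_vec_def bob_phase_def Let_def j_def[symmetric] using True \<open>j < 4\<close>
      by (simp add: cnj_ipow ipow_add)
    finally show ?thesis .
  qed
qed

definition bob_phases_orthonormal :: "(nat \<times> nat) list \<Rightarrow> bool" where
  "bob_phases_orthonormal st \<longleftrightarrow> (\<forall>c<4.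
     (\<forall>a<4. \<forall>b<4. a \<noteq> b \<longrightarrow> (\<Sum>l<4. ipow (3 * bob_phase c (st ! a) l + bob_phase c (st ! b) l)) = 0) \<and>
     (\<forall>i<4. \<forall>j<4. i \<noteq> j \<longrightarrow> (\<Sum>b<4. ipow (bob_phase c (st ! b) i + 3 * bob_phase c (st ! b) j)) = 0))"

lemma oneway_A_to_B_alice_basis:
  assumes "length st = 4" "\<forall>s\<in>set st. snd s < 4" "bob_phases_orthonormal st"
  shows "oneway_A_to_B (set st)"
proof (rule oneway_A_to_B_by_bases[OF orthonormal_basis_alice], intro allI impI)
  fix c :: nat assume "c < 4"
  have "orthonormal_basis 4 (\<lambda>b. phase_vec (bob_phase c (st ! b)))"
    using assms(3) \<open>c < 4\<close> unfolding bob_phases_orthonormal_def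
    by (intro orthonormal_basis_phase_vec) blast+
  moreover have "b < 4 \<Longrightarrow> bob_state (phase_vec (alice_phase c)) (st ! b) = phase_vec (bob_phase c (st ! b))" for b
    using assms(1,2) by (intro bob_state_alice) simp
  ultimately show "orthonormal_basis (length st) (\<lambda>b. bob_state (phase_vec (alice_phase c)) (st ! b))"
    using assms(1) orthonormal_basis_cong[of 4 "\<lambda>b. bob_state (phase_vec (alice_phase c)) (st ! b)"]
    by simp
qed

theorem theorem6:
  assumes "T \<in> {{(0,1),(1,0),(1,1)}, {(0,1),(1,0),(3,0)}, {(0,1),(1,0),(3,2)},
                 {(0,1),(1,1),(1,2)}, {(0,1),(1,1),(3,1)}, {(0,1),(1,1),(3,3)},
                 {(0,1),(1,2),(3,0)}, {(0,1),(1,2),(3,2)}, {(0,1),(1,3),(3,1)},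
                 {(0,1),(1,3),(3,3)}}"
  shows "oneway_PVM_distinguishable (insert (0,0) T)"
proof -
  have with_00: "oneway_PVM_distinguishable (insert (0,0) {t1, t2, t3})"
    if "snd t1 < 4" "snd t2 < 4" "snd t3 < 4" "bob_phases_orthonormal [(0,0), t1, t2, t3]"
    for t1 t2 t3 :: "nat \<times> nat"
    using oneway_A_to_B_alice_basis[of "[(0,0), t1, t2, t3]"] that
    unfolding oneway_PVM_distinguishable_def by simp
  from assms show ?thesis
    by (elim insertE emptyE; simp only:; intro with_00)
      (simp_all add: bob_phases_orthonormal_def all_less_4 sum_lessThan_4 bob_phase_def alice_phase_def
        ipow_def i_cube)
qed

end
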